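(* A signed bigraph $\widehat{G}$ is not chordal if and only if it contains a non-trivial induced subgraph which has no signed simplicial edge.
   Context: A signed graph is a finite simple graph each of whose edges is assigned a sign, positive or negative. A signed bigraph is a signed graph whose underlying graph is bipartite. An induced subgraph is obtained by deleting vertices only; it is non-trivial if it has at least one edge. A signed graph is positive if all its edges are positive. In a bigraph with bipartition $(X,Y)$, a subgraph $H$ is a biclique if every vertex of $V(H)\cap X$ is adjacent to every vertex of $V(H)\cap Y$. For an edge $uv$, $N(uv)=(N(u)\cup N(v))\setminus\{u,v\}$; $uv$ is signed simplicial (in the signed bigraph under consideration) if $N(uv)$ induces a positive biclique. A signed bigraph $\widehat G$ is chordal if its edges can be ordered $e_1,\dots,e_m$ so that each $e_i$ is signed simplicial in $\widehat G-\{e_1,\dots,e_{i-1}\}$ (edges deleted, vertices kept). *)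

theory Defs
  imports Main
begin

text \<open>A signed bigraph is given by a vertex set V, a set E of edges (2-element
vertex sets), a sign function sg on edges (True = positive, False = negative),
and a bipartition (X, Y) of V such that every edge joins X and Y.\<close>

definition signed_bigraph :: "'a set \<Rightarrow> 'a set set \<Rightarrow> 'a set \<Rightarrow> 'a set \<Rightarrow> bool" where
  "signed_bigraph V E X Y \<longleftrightarrow> finite V \<and> X \<union> Y = V \<and> X \<inter> Y = {} \<and>
     (\<forall>e\<in>E. \<exists>x\<in>X. \<exists>y\<in>Y. e = {x, y})"

definition nbhd :: "'a set set \<Rightarrow> 'a \<Rightarrow> 'a set" where
  "nbhd E u = {w. {u, w} \<in> E}"

definition edge_nbhd :: "'a set set \<Rightarrow> 'a \<Rightarrow> 'a \<Rightarrow> 'a set" where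
  "edge_nbhd E u v = (nbhd E u \<union> nbhd E v) - {u, v}"

definition induced_edges :: "'a set set \<Rightarrow> 'a set \<Rightarrow> 'a set set" where
  "induced_edges E S = {e \<in> E. e \<subseteq> S}"

definition is_biclique :: "'a set set \<Rightarrow> 'a set \<Rightarrow> 'a set \<Rightarrow> 'a set \<Rightarrow> bool" where
  "is_biclique E X Y S \<longleftrightarrow> (\<forall>x\<in>S \<inter> X. \<forall>y\<in>S \<inter> Y. {x, y} \<in> E)"

definition is_positive :: "'a set set \<Rightarrow> ('a set \<Rightarrow> bool) \<Rightarrow> 'a set \<Rightarrow> bool" where
  "is_positive E sg S \<longleftrightarrow> (\<forall>e\<in>induced_edges E S. sg e)"

definition signed_simplicial ::
  "'a set set \<Rightarrow> ('a set \<Rightarrow> bool) \<Rightarrow> 'a set \<Rightarrow> 'a set \<Rightarrow> 'a set \<Rightarrow> bool" where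
  "signed_simplicial E sg X Y e \<longleftrightarrow> e \<in> E \<and>
     (\<exists>u v. e = {u, v} \<and> is_biclique E X Y (edge_nbhd E u v) \<and>
            is_positive E sg (edge_nbhd E u v))"

definition chordal_sb :: "'a set set \<Rightarrow> ('a set \<Rightarrow> bool) \<Rightarrow> 'a set \<Rightarrow> 'a set \<Rightarrow> bool" where
  "chordal_sb E sg X Y \<longleftrightarrow> (\<exists>es. distinct es \<and> set es = E \<and>
     (\<forall>i<length es. signed_simplicial (E - set (take i es)) sg X Y (es ! i)))"

end

theory Submission
  imports Defs
begin

(*
  A chordal signed bigraph is hereditarily simplicial: in the subgraph induced by W, the
  first edge of an elimination ordering that lies in W is still signed simplicial, because
  deleting edges and vertices only shrinks N(uv) and the subgraph it induces.

  Conversely, by strong induction on the edge set it suffices to show that deleting a signed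
  simplicial edge uv (u in X, v in Y) from a hereditarily simplicial G leaves a graph that
  still has a signed simplicial edge.  If u is the only neighbour of v, then G - uv is the
  subgraph induced by V - {v}.  Otherwise G - u is chordal by induction, and along an
  elimination ordering of G - u one finds a signed simplicial edge xy (y in Y) such that y
  does not positively dominate v, i.e. y is not positively adjacent to every neighbour of v.
  This edge stays signed simplicial when the edges at u are restored: y is not adjacent to u,
  since otherwise y would lie in N(uv), and the positive biclique on N(uv) would make y
  positively dominate v.
*)

definition bipartite :: "'a set \<Rightarrow> 'a set \<Rightarrow> 'a set set \<Rightarrow> bool" where
  "bipartite X Y G \<longleftrightarrow> X \<inter> Y = {} \<and> (\<forall>e\<in>G. \<exists>x\<in>X. \<exists>y\<in>Y. e = {x, y})"

definition hereditarily_simplicial ::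
  "'a set set \<Rightarrow> ('a set \<Rightarrow> bool) \<Rightarrow> 'a set \<Rightarrow> 'a set \<Rightarrow> bool" where
  "hereditarily_simplicial G sg X Y \<longleftrightarrow> (\<forall>W. induced_edges G W \<noteq> {} \<longrightarrow>
     (\<exists>e\<in>induced_edges G W. signed_simplicial (induced_edges G W) sg X Y e))"

definition positive_dominators :: "'a set set \<Rightarrow> ('a set \<Rightarrow> bool) \<Rightarrow> 'a set \<Rightarrow> 'a \<Rightarrow> 'a set" where
  "positive_dominators G sg Y v = {y \<in> Y. y \<noteq> v \<and> (\<forall>b\<in>nbhd G v. {b, y} \<in> G \<and> sg {b, y})}"

lemma mem_edge_nbhd:
  "w \<in> edge_nbhd G u v \<longleftrightarrow> ({u, w} \<in> G \<or> {v, w} \<in> G) \<and> w \<noteq> u \<and> w \<noteq> v"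
  unfolding edge_nbhd_def nbhd_def by auto

lemma edge_nbhd_commute: "edge_nbhd G u v = edge_nbhd G v u"
  unfolding edge_nbhd_def by auto

lemma signed_simplicial_pair_iff:
  "signed_simplicial G sg X Y {x, y} \<longleftrightarrow> {x, y} \<in> G \<and>
     is_biclique G X Y (edge_nbhd G x y) \<and> is_positive G sg (edge_nbhd G x y)"
  unfolding signed_simplicial_def by (auto simp: doubleton_eq_iff edge_nbhd_commute)

lemma signed_simplicial_nbhd_edge:
  assumes "signed_simplicial G sg X Y {u, v}"
    and "b \<in> edge_nbhd G u v" "b \<in> X" "y \<in> edge_nbhd G u v" "y \<in> Y"
  shows "{b, y} \<in> G \<and> sg {b, y}"
proof -
  have "{b, y} \<in> G"
    using assms unfolding signed_simplicial_pair_iff is_biclique_def by blast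
  moreover have "{b, y} \<in> induced_edges G (edge_nbhd G u v)"
    using calculation assms(2,4) unfolding induced_edges_def by blast
  ultimately show ?thesis
    using assms(1) unfolding signed_simplicial_pair_iff is_positive_def by blast
qed

lemma bipartite_subset: "bipartite X Y G \<Longrightarrow> H \<subseteq> G \<Longrightarrow> bipartite X Y H"
  unfolding bipartite_def by blast

lemma bipartite_edgeE:
  assumes "bipartite X Y G" "e \<in> G"
  obtains x y where "e = {x, y}" "x \<in> X" "y \<in> Y"
  using assms unfolding bipartite_def by blast

lemma bipartite_no_edge_in_X: "bipartite X Y G \<Longrightarrow> {p, q} \<in> G \<Longrightarrow> p \<in> X \<Longrightarrow> q \<notin> X"
  unfolding bipartite_def by (fastforce simp: doubleton_eq_iff)

lemma bipartite_no_edge_in_Y: "bipartite X Y G \<Longrightarrow> {p, q} \<in> G \<Longrightarrow> p \<in> Y \<Longrightarrow> q \<notin> Y"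
  unfolding bipartite_def by (fastforce simp: doubleton_eq_iff)

lemma bipartite_edge_X_Y: "bipartite X Y G \<Longrightarrow> {p, q} \<in> G \<Longrightarrow> p \<in> X \<Longrightarrow> q \<in> Y"
  unfolding bipartite_def by (fastforce simp: doubleton_eq_iff)

lemma bipartite_nbhd_subset: "bipartite X Y G \<Longrightarrow> v \<in> Y \<Longrightarrow> nbhd G v \<subseteq> X"
  unfolding bipartite_def nbhd_def by (fastforce simp: doubleton_eq_iff)

lemma induced_edges_subset: "induced_edges G W \<subseteq> G"
  unfolding induced_edges_def by auto

lemma induced_edges_induced_edges: "induced_edges (induced_edges G W) W' = induced_edges G (W \<inter> W')"
  unfolding induced_edges_def by auto

lemma hereditarily_simplicial_induced:
  "hereditarily_simplicial G sg X Y \<Longrightarrow> hereditarily_simplicial (induced_edges G W) sg X Y"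
  unfolding hereditarily_simplicial_def by (simp add: induced_edges_induced_edges)

lemma signed_simplicial_induced:
  assumes "signed_simplicial G sg X Y e" "e \<subseteq> W"
  shows "signed_simplicial (induced_edges G W) sg X Y e"
proof -
  obtain u v where e: "e = {u, v}" and "e \<in> G"
    and bc: "is_biclique G X Y (edge_nbhd G u v)" and ps: "is_positive G sg (edge_nbhd G u v)"
    using assms(1) unfolding signed_simplicial_def by blast
  let ?H = "induced_edges G W"
  have sub: "edge_nbhd ?H u v \<subseteq> edge_nbhd G u v \<inter> W"
    unfolding edge_nbhd_def nbhd_def induced_edges_def by auto
  have "is_biclique ?H X Y (edge_nbhd ?H u v)"
    using bc sub unfolding is_biclique_def induced_edges_def by blast
  moreover have "is_positive ?H sg (edge_nbhd ?H u v)"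
    using ps sub unfolding is_positive_def induced_edges_def by blast
  moreover have "e \<in> ?H" using \<open>e \<in> G\<close> assms(2) unfolding induced_edges_def by blast
  ultimately show ?thesis unfolding signed_simplicial_def using e by blast
qed

lemma signed_simplicial_supergraph:
  assumes "K \<subseteq> G" "signed_simplicial K sg X Y {x, y}"
    and new: "\<forall>f\<in>G - K. x \<notin> f \<and> y \<notin> f \<and> \<not> f \<subseteq> edge_nbhd K x y"
  shows "signed_simplicial G sg X Y {x, y}"
proof -
  have "nbhd G w = nbhd K w" if "w \<in> {x, y}" for w
    using assms(1) new that unfolding nbhd_def by blast
  then have S: "edge_nbhd G x y = edge_nbhd K x y"
    unfolding edge_nbhd_def by simp
  have "induced_edges G (edge_nbhd K x y) = induced_edges K (edge_nbhd K x y)"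
    using assms(1) new unfolding induced_edges_def by blast
  then have "is_biclique G X Y (edge_nbhd G x y)" "is_positive G sg (edge_nbhd G x y)"
    using assms(2) unfolding S signed_simplicial_pair_iff is_biclique_def is_positive_def
    by (auto simp: induced_edges_def)
  then show ?thesis
    using assms(1,2) by (auto simp: signed_simplicial_pair_iff)
qed

lemma chordal_sb_finite: "chordal_sb G sg X Y \<Longrightarrow> finite G"
  unfolding chordal_sb_def by auto

lemma chordal_sb_empty: "chordal_sb {} sg X Y"
  unfolding chordal_sb_def by (intro exI[of _ "[]"]) simp

lemma chordal_sb_insert:
  assumes e: "e \<in> G" "signed_simplicial G sg X Y e" and "chordal_sb (G - {e}) sg X Y"
  shows "chordal_sb G sg X Y"
proof -
  obtain es where es: "distinct es" "set es = G - {e}"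
    and ordered: "\<forall>i<length es. signed_simplicial (G - {e} - set (take i es)) sg X Y (es ! i)"
    using assms(3) unfolding chordal_sb_def by blast
  have "signed_simplicial (G - set (take i (e # es))) sg X Y ((e # es) ! i)"
    if "i < length (e # es)" for i
  proof (cases i)
    case (Suc j)
    have "G - set (take i (e # es)) = G - {e} - set (take j es)" using Suc by auto
    then show ?thesis using that ordered Suc by simp
  qed (use e in simp)
  then show ?thesis
    using e es unfolding chordal_sb_def by (intro exI[of _ "e # es"]) auto
qed

lemma chordal_sb_nonempty:
  assumes "chordal_sb G sg X Y" "G \<noteq> {}"
  shows "\<exists>e\<in>G. signed_simplicial G sg X Y e \<and> chordal_sb (G - {e}) sg X Y"
proof -
  obtain es where es: "distinct es" "set es = G"
    and ordered: "\<forall>i<length es. signed_simplicial (G - set (take i es)) sg X Y (es ! i)"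
    using assms(1) unfolding chordal_sb_def by blast
  then obtain e es' where Cons: "es = e # es'" using assms(2) by (cases es) auto
  have "signed_simplicial (G - {e} - set (take i es')) sg X Y (es' ! i)" if "i < length es'" for i
  proof -
    have "G - set (take (Suc i) es) = G - {e} - set (take i es')" using Cons by auto
    then show ?thesis using ordered[rule_format, of "Suc i"] that Cons by simp
  qed
  then have "chordal_sb (G - {e}) sg X Y"
    using es Cons unfolding chordal_sb_def by (intro exI[of _ es']) auto
  moreover have "e \<in> G" "signed_simplicial G sg X Y e"
    using es ordered[rule_format, of 0] Cons by auto
  ultimately show ?thesis by blast
qed

lemma chordal_sb_induct[consumes 1, case_names empty delete]:
  assumes "chordal_sb G sg X Y" "P {}"
    and delete: "\<And>G e. e \<in> G \<Longrightarrow> signed_simplicial G sg X Y e \<Longrightarrow>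
                    chordal_sb (G - {e}) sg X Y \<Longrightarrow> P (G - {e}) \<Longrightarrow> P G"
  shows "P G"
  using chordal_sb_finite[OF assms(1)] assms(1)
proof (induction G rule: finite_psubset_induct)
  case (psubset G)
  show ?case
  proof (cases "G = {}")
    case False
    then obtain e where "e \<in> G" "signed_simplicial G sg X Y e" "chordal_sb (G - {e}) sg X Y"
      using chordal_sb_nonempty[OF psubset.prems] by blast
    moreover have "P (G - {e})" using psubset.IH calculation by blast
    ultimately show ?thesis by (rule delete)
  qed (simp add: \<open>P {}\<close>)
qed

lemma chordal_imp_hereditarily_simplicial:
  assumes "chordal_sb G sg X Y"
  shows "hereditarily_simplicial G sg X Y"
  using assms
proof (induction G rule: chordal_sb_induct)
  case empty
  then show ?case unfolding hereditarily_simplicial_def induced_edges_def by simp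
next
  case (delete G e)
  show ?case unfolding hereditarily_simplicial_def
  proof (intro allI impI)
    fix W assume W: "induced_edges G W \<noteq> {}"
    show "\<exists>f\<in>induced_edges G W. signed_simplicial (induced_edges G W) sg X Y f"
    proof (cases "e \<subseteq> W")
      case True
      then show ?thesis
        using delete.hyps(1,2) signed_simplicial_induced[of G sg X Y e W]
        unfolding induced_edges_def by blast
    next
      case False
      then have "induced_edges (G - {e}) W = induced_edges G W"
        unfolding induced_edges_def by auto
      then show ?thesis
        using delete.IH W unfolding hereditarily_simplicial_def by metis
    qed
  qed
qed

lemma signed_simplicial_transfer_to_dominated:
  assumes bp: "bipartite X Y G" and xa: "signed_simplicial G sg X Y {x, a}"
    and x: "x \<in> X" and a: "a \<in> positive_dominators G sg Y v"
    and xv: "x \<in> nbhd G v" and v: "v \<in> Y"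
  shows "signed_simplicial G sg X Y {x, v}"
proof -
  let ?S = "edge_nbhd G x v" and ?T = "edge_nbhd G x a"
  have a_Y: "a \<in> Y" and dom: "\<And>b. b \<in> nbhd G v \<Longrightarrow> {b, a} \<in> G \<and> sg {b, a}"
    using a unfolding positive_dominators_def by auto
  have SX: "p \<in> nbhd G v \<and> p \<in> ?T" if "p \<in> ?S" "p \<in> X" for p
  proof -
    have "{x, p} \<notin> G" using bipartite_no_edge_in_X[OF bp] x that(2) by blast
    then have pv: "p \<in> nbhd G v" "p \<noteq> x" using that(1) by (auto simp: mem_edge_nbhd nbhd_def)
    moreover have "p \<noteq> a" using that(2) a_Y bp unfolding bipartite_def by auto
    ultimately show ?thesis using dom[OF pv(1)] by (auto simp: mem_edge_nbhd insert_commute)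
  qed
  have SY: "q = a \<or> q \<in> ?T" if "q \<in> ?S" "q \<in> Y" for q
  proof -
    have "{v, q} \<notin> G" using bipartite_no_edge_in_Y[OF bp] v that(2) by blast
    then show ?thesis using that(1) by (auto simp: mem_edge_nbhd)
  qed
  have edge: "{p, q} \<in> G \<and> sg {p, q}" if "p \<in> ?S" "p \<in> X" "q \<in> ?S" "q \<in> Y" for p q
    using SX[OF that(1,2)] SY[OF that(3,4)] dom signed_simplicial_nbhd_edge[OF xa _ that(2) _ that(4)]
    by blast
  have "is_biclique G X Y ?S"
    using edge unfolding is_biclique_def by blast
  moreover have "is_positive G sg ?S"
    unfolding is_positive_def
  proof
    fix e assume "e \<in> induced_edges G ?S"
    then have "e \<in> G" "e \<subseteq> ?S" unfolding induced_edges_def by auto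
    then show "sg e" using edge by (auto elim: bipartite_edgeE[OF bp])
  qed
  moreover have "{x, v} \<in> G" using xv by (simp add: nbhd_def insert_commute)
  ultimately show ?thesis by (simp add: signed_simplicial_pair_iff)
qed

lemma positive_dominators_delete_edge:
  assumes bp: "bipartite X Y G" and x: "x \<in> X" and a: "a \<in> Y"
    and v: "v \<in> Y" "v \<noteq> a" and xv: "x \<notin> nbhd G v"
  shows "nbhd (G - {{x, a}}) v = nbhd G v"
    and "positive_dominators (G - {{x, a}}) sg Y v = positive_dominators G sg Y v"
proof -
  have "v \<notin> {x, a}" using x v bp unfolding bipartite_def by auto
  then show nbhd_eq: "nbhd (G - {{x, a}}) v = nbhd G v"
    unfolding nbhd_def by auto
  have "{b, y} \<noteq> {x, a}" if "b \<in> nbhd G v" "y \<in> Y" for b y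
    using that bipartite_nbhd_subset[OF bp v(1)] xv a bp
    unfolding bipartite_def by (auto simp: doubleton_eq_iff)
  then show "positive_dominators (G - {{x, a}}) sg Y v = positive_dominators G sg Y v"
    unfolding positive_dominators_def nbhd_eq by auto
qed

lemma signed_simplicial_insert_edge:
  assumes xy': "signed_simplicial (G - {{x, a}}) sg X Y {x', y'}"
    and "x \<in> X" "a \<in> Y" "x' \<notin> {x, a}" "y' \<notin> {x, a}"
  shows "signed_simplicial G sg X Y {x', y'}"
proof -
  have "{x, a} \<notin> G - {{x, a}}" by simp
  then have "\<not> {x, a} \<subseteq> edge_nbhd (G - {{x, a}}) x' y'"
    using signed_simplicial_nbhd_edge[OF xy' _ assms(2) _ assms(3)] by blast
  then show ?thesis
    using signed_simplicial_supergraph[OF _ xy'] assms(4,5) by blast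
qed

lemma simplicial_neighbour_in_positive_dominators:
  assumes bp: "bipartite X Y G" and xa: "signed_simplicial G sg X Y {x, a}"
    and x: "x \<in> X" and a: "a \<in> positive_dominators G sg Y v"
    and xv: "x \<notin> nbhd G v" and v: "v \<in> Y" and xy: "{x, y} \<in> G" and ya: "y \<noteq> a"
  shows "y \<in> positive_dominators G sg Y v"
proof -
  have y: "y \<in> Y" "y \<noteq> x"
    using bipartite_edge_X_Y[OF bp xy x] x bp unfolding bipartite_def by auto
  have yv: "y \<noteq> v" using xv xy by (auto simp: nbhd_def insert_commute)
  have y_nbhd: "y \<in> edge_nbhd G x a" using xy y ya by (simp add: mem_edge_nbhd)
  have "{b, y} \<in> G \<and> sg {b, y}" if b: "b \<in> nbhd G v" for b
  proof -
    have "b \<in> X" using bipartite_nbhd_subset[OF bp v] b by blast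
    moreover have "{b, a} \<in> G" using a b unfolding positive_dominators_def by auto
    moreover have "b \<noteq> x" "b \<noteq> a" using b xv \<open>b \<in> X\<close> a bp
      unfolding positive_dominators_def bipartite_def by auto
    ultimately have "b \<in> edge_nbhd G x a" by (auto simp: mem_edge_nbhd insert_commute)
    then show ?thesis
      using signed_simplicial_nbhd_edge[OF xa _ \<open>b \<in> X\<close> y_nbhd y(1)] by blast
  qed
  then show ?thesis using y yv unfolding positive_dominators_def by blast
qed

lemma chordal_ex_simplicial_edge_outside_dominators:
  assumes "chordal_sb G sg X Y" "bipartite X Y G" "v \<in> Y" "nbhd G v \<noteq> {}"
  shows "\<exists>x\<in>X. \<exists>y\<in>Y. y \<notin> positive_dominators G sg Y v \<and> signed_simplicial G sg X Y {x, y}"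
  using assms(1,2,4)
proof (induction G rule: chordal_sb_induct)
  case empty
  then show ?case by (simp add: nbhd_def)
next
  case (delete G g)
  obtain x a where g: "g = {x, a}" and x: "x \<in> X" and a: "a \<in> Y"
    using bipartite_edgeE[OF delete.prems(1) delete.hyps(1)] by blast
  have xa: "signed_simplicial G sg X Y {x, a}" using delete.hyps(2) g by simp
  consider (undominated) "a \<notin> positive_dominators G sg Y v"
    | (adjacent) "a \<in> positive_dominators G sg Y v" "x \<in> nbhd G v"
    | (nonadjacent) "a \<in> positive_dominators G sg Y v" "x \<notin> nbhd G v"
    by blast
  then show ?case
  proof cases
    case undominated
    then show ?thesis using xa x a by blast
  next
    case adjacent
    then have "signed_simplicial G sg X Y {x, v}"
      using signed_simplicial_transfer_to_dominated[OF delete.prems(1) xa x] \<open>v \<in> Y\<close> by blast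
    moreover have "v \<notin> positive_dominators G sg Y v" unfolding positive_dominators_def by simp
    ultimately show ?thesis using x \<open>v \<in> Y\<close> by blast
  next
    case nonadjacent
    note a_dom = nonadjacent(1) and xv = nonadjacent(2)
    have "v \<noteq> a" using a_dom unfolding positive_dominators_def by auto
    note unchanged = positive_dominators_delete_edge[OF delete.prems(1) x a \<open>v \<in> Y\<close> this xv]
    obtain x' y' where x': "x' \<in> X" and y': "y' \<in> Y"
      and y'_dom: "y' \<notin> positive_dominators G sg Y v"
      and xy': "signed_simplicial (G - {g}) sg X Y {x', y'}"
      using delete.IH bipartite_subset[OF delete.prems(1)] delete.prems(2) unchanged g
      by (metis Diff_subset)
    have "y' \<noteq> a" using y'_dom a_dom by blast
    have "x' \<noteq> x"
    proof
      assume "x' = x"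
      moreover have "{x', y'} \<in> G" using xy' by (simp add: signed_simplicial_pair_iff)
      ultimately have "y' \<in> positive_dominators G sg Y v"
        using simplicial_neighbour_in_positive_dominators[OF delete.prems(1) xa x a_dom xv
            \<open>v \<in> Y\<close> _ \<open>y' \<noteq> a\<close>] by blast
      then show False using y'_dom by blast
    qed
    then have "x' \<notin> {x, a}" "y' \<notin> {x, a}"
      using x' y' x a \<open>y' \<noteq> a\<close> delete.prems(1) unfolding bipartite_def by auto
    then have "signed_simplicial G sg X Y {x', y'}"
      using signed_simplicial_insert_edge[OF xy'[unfolded g] x a] by blast
    then show ?thesis using x' y' y'_dom by blast
  qed
qed

lemma nbhd_induced_delete_vertex: "v \<noteq> u \<Longrightarrow> nbhd (induced_edges G (- {u})) v = nbhd G v - {u}"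
  unfolding nbhd_def induced_edges_def by auto

lemma delete_pendant_edge_eq_induced:
  assumes bp: "bipartite X Y G" and v: "v \<in> Y" and "nbhd G v \<subseteq> {u}"
  shows "G - {{u, v}} = induced_edges G (- {v})"
proof -
  have "e = {u, v}" if eG: "e \<in> G" and ve: "v \<in> e" for e
  proof -
    obtain p q where e: "e = {p, q}" "p \<in> X" "q \<in> Y" using bipartite_edgeE[OF bp eG] .
    then have "q = v" using ve v bp unfolding bipartite_def by auto
    then have "p \<in> nbhd G v" using e eG by (simp add: nbhd_def insert_commute)
    then show ?thesis using assms(3) e \<open>q = v\<close> by auto
  qed
  then show ?thesis unfolding induced_edges_def by auto
qed

lemma simplicial_edge_neighbour_in_positive_dominators:
  assumes bp: "bipartite X Y G" and uv: "signed_simplicial G sg X Y {u, v}"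
    and u: "u \<in> X" and v: "v \<in> Y" and uy: "{u, y} \<in> G" and yv: "y \<noteq> v"
  shows "y \<in> positive_dominators (induced_edges G (- {u})) sg Y v"
proof -
  have "u \<noteq> v" using u v bp unfolding bipartite_def by auto
  have y: "y \<in> Y" "y \<noteq> u"
    using bipartite_edge_X_Y[OF bp uy u] u bp unfolding bipartite_def by auto
  have y_nbhd: "y \<in> edge_nbhd G u v" using uy y yv by (simp add: mem_edge_nbhd)
  have "{b, y} \<in> induced_edges G (- {u}) \<and> sg {b, y}"
    if b: "b \<in> nbhd (induced_edges G (- {u})) v" for b
  proof -
    have "b \<in> nbhd G v" "b \<noteq> u"
      using b nbhd_induced_delete_vertex[OF \<open>u \<noteq> v\<close>[symmetric]] by auto
    moreover have "b \<in> X" using bipartite_nbhd_subset[OF bp v] calculation(1) by blast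
    moreover have "b \<noteq> v" using calculation(3) v bp unfolding bipartite_def by auto
    ultimately have "b \<in> edge_nbhd G u v" by (auto simp: mem_edge_nbhd nbhd_def insert_commute)
    then show ?thesis
      using signed_simplicial_nbhd_edge[OF uv _ \<open>b \<in> X\<close> y_nbhd y(1)] \<open>b \<noteq> u\<close> y(2)
      unfolding induced_edges_def by auto
  qed
  then show ?thesis using y yv unfolding positive_dominators_def by blast
qed

lemma signed_simplicial_restore_vertex:
  assumes bp: "bipartite X Y G" and xy: "signed_simplicial (induced_edges G (- {u})) sg X Y {x, y}"
    and ux: "{u, x} \<notin> G" and uy: "{u, y} \<notin> G"
  shows "signed_simplicial G sg X Y {x, y}"
proof (rule signed_simplicial_supergraph[OF induced_edges_subset xy])
  let ?K = "induced_edges G (- {u})"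
  have "{x, y} \<in> ?K" using xy by (simp add: signed_simplicial_pair_iff)
  then have "u \<notin> {x, y}" unfolding induced_edges_def by auto
  then have "u \<notin> edge_nbhd ?K x y" by (auto simp: mem_edge_nbhd induced_edges_def)
  show "\<forall>f\<in>G - ?K. x \<notin> f \<and> y \<notin> f \<and> \<not> f \<subseteq> edge_nbhd ?K x y"
  proof
    fix f assume f: "f \<in> G - ?K"
    then have "u \<in> f" unfolding induced_edges_def by auto
    obtain p q where "f = {p, q}" using bipartite_edgeE[OF bp] f by blast
    then have "f = {u, w}" if "w \<in> f" "w \<noteq> u" for w using that \<open>u \<in> f\<close> by auto
    then show "x \<notin> f \<and> y \<notin> f \<and> \<not> f \<subseteq> edge_nbhd ?K x y"
      using f ux uy \<open>u \<in> f\<close> \<open>u \<notin> edge_nbhd ?K x y\<close> \<open>u \<notin> {x, y}\<close> by auto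
  qed
qed

lemma ex_signed_simplicial_after_delete:
  assumes bp: "bipartite X Y G" and hs: "hereditarily_simplicial G sg X Y"
    and IH: "\<And>H. H \<subset> G \<Longrightarrow> hereditarily_simplicial H sg X Y \<Longrightarrow> chordal_sb H sg X Y"
    and u: "u \<in> X" and v: "v \<in> Y" and uv: "signed_simplicial G sg X Y {u, v}"
    and ne: "G - {{u, v}} \<noteq> {}"
  shows "\<exists>f\<in>G - {{u, v}}. signed_simplicial (G - {{u, v}}) sg X Y f"
proof (cases "nbhd G v \<subseteq> {u}")
  case True
  then show ?thesis
    using delete_pendant_edge_eq_induced[OF bp v] hs ne unfolding hereditarily_simplicial_def
    by metis
next
  case False
  define K where "K = induced_edges G (- {u})"
  have "u \<noteq> v" using u v bp unfolding bipartite_def by auto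
  have "{u, v} \<in> G" using uv by (simp add: signed_simplicial_pair_iff)
  then have "K \<subset> G" unfolding K_def induced_edges_def by auto
  then have "chordal_sb K sg X Y"
    using IH hereditarily_simplicial_induced[OF hs] unfolding K_def by blast
  moreover have "bipartite X Y K" using bipartite_subset[OF bp induced_edges_subset] unfolding K_def .
  moreover have "nbhd K v \<noteq> {}"
    using False nbhd_induced_delete_vertex[OF \<open>u \<noteq> v\<close>[symmetric]] unfolding K_def by auto
  ultimately obtain x y where x: "x \<in> X" and y: "y \<in> Y"
    and y_dom: "y \<notin> positive_dominators K sg Y v" and xy: "signed_simplicial K sg X Y {x, y}"
    using chordal_ex_simplicial_edge_outside_dominators[OF _ _ v] by blast
  have K_eq: "K = induced_edges (G - {{u, v}}) (- {u})" unfolding K_def induced_edges_def by auto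
  have "{u, x} \<notin> G - {{u, v}}" using bipartite_no_edge_in_X[OF bp _ u] x by blast
  moreover have "{u, y} \<notin> G - {{u, v}}"
    using simplicial_edge_neighbour_in_positive_dominators[OF bp uv u v] y_dom
    unfolding K_def by blast
  ultimately have "signed_simplicial (G - {{u, v}}) sg X Y {x, y}"
    using signed_simplicial_restore_vertex[OF bipartite_subset[OF bp] xy[unfolded K_eq]] by blast
  then show ?thesis by (auto simp: signed_simplicial_def)
qed

lemma hereditarily_simplicial_delete:
  assumes bp: "bipartite X Y G" and hs: "hereditarily_simplicial G sg X Y"
    and IH: "\<And>H. H \<subset> G \<Longrightarrow> hereditarily_simplicial H sg X Y \<Longrightarrow> chordal_sb H sg X Y"
    and e: "e \<in> G" "signed_simplicial G sg X Y e"
  shows "hereditarily_simplicial (G - {e}) sg X Y"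
  unfolding hereditarily_simplicial_def
proof (intro allI impI)
  fix W assume ne: "induced_edges (G - {e}) W \<noteq> {}"
  show "\<exists>f\<in>induced_edges (G - {e}) W. signed_simplicial (induced_edges (G - {e}) W) sg X Y f"
  proof (cases "e \<subseteq> W")
    case False
    then have "induced_edges (G - {e}) W = induced_edges G W" unfolding induced_edges_def by auto
    then show ?thesis using hs ne unfolding hereditarily_simplicial_def by metis
  next
    case True
    define H where "H = induced_edges G W"
    obtain u v where uv: "e = {u, v}" "u \<in> X" "v \<in> Y" using bipartite_edgeE[OF bp e(1)] .
    have "H \<subseteq> G" unfolding H_def by (rule induced_edges_subset)
    have "\<exists>f\<in>H - {{u, v}}. signed_simplicial (H - {{u, v}}) sg X Y f"
    proof (rule ex_signed_simplicial_after_delete[OF _ _ _ uv(2,3)])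
      show "bipartite X Y H" using bipartite_subset[OF bp \<open>H \<subseteq> G\<close>] .
      show "hereditarily_simplicial H sg X Y"
        unfolding H_def using hereditarily_simplicial_induced[OF hs] .
      show "chordal_sb H' sg X Y" if "H' \<subset> H" "hereditarily_simplicial H' sg X Y" for H'
        using IH that \<open>H \<subseteq> G\<close> by blast
      show "signed_simplicial H sg X Y {u, v}"
        unfolding H_def using signed_simplicial_induced[OF e(2) True] uv(1) by simp
      show "H - {{u, v}} \<noteq> {}"
        using ne uv(1) unfolding H_def induced_edges_def by auto
    qed
    moreover have "induced_edges (G - {e}) W = H - {{u, v}}"
      unfolding H_def induced_edges_def using uv(1) by auto
    ultimately show ?thesis by simp
  qed
qed

lemma hereditarily_simplicial_imp_chordal:
  assumes "finite G" "bipartite X Y G" "hereditarily_simplicial G sg X Y"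
  shows "chordal_sb G sg X Y"
  using assms
proof (induction G rule: finite_psubset_induct)
  case (psubset G)
  show ?case
  proof (cases "G = {}")
    case True
    then show ?thesis using chordal_sb_empty by simp
  next
    case False
    have "induced_edges G UNIV = G" unfolding induced_edges_def by auto
    then obtain e where e: "e \<in> G" "signed_simplicial G sg X Y e"
      using psubset.prems(2) False unfolding hereditarily_simplicial_def by metis
    have IH: "chordal_sb H sg X Y" if "H \<subset> G" "hereditarily_simplicial H sg X Y" for H
      using psubset.IH[OF that(1) bipartite_subset[OF psubset.prems(1)] that(2)] that(1) by blast
    have "G - {e} \<subset> G" using e(1) by blast
    then have "chordal_sb (G - {e}) sg X Y"
      using IH hereditarily_simplicial_delete[OF psubset.prems IH e] by blast
    then show ?thesis using chordal_sb_insert[OF e] by blast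
  qed
qed

lemma signed_simplicial_Int_sides:
  assumes "\<forall>f\<in>G. f \<subseteq> W"
  shows "signed_simplicial G sg (X \<inter> W) (Y \<inter> W) e \<longleftrightarrow> signed_simplicial G sg X Y e"
proof -
  have "edge_nbhd G u v \<subseteq> W" for u v
    using assms unfolding edge_nbhd_def nbhd_def by auto
  then have "is_biclique G (X \<inter> W) (Y \<inter> W) (edge_nbhd G u v) \<longleftrightarrow>
      is_biclique G X Y (edge_nbhd G u v)" for u v
    unfolding is_biclique_def by blast
  then show ?thesis unfolding signed_simplicial_def by simp
qed

lemma hereditarily_simplicial_iff:
  assumes "\<forall>e\<in>G. e \<subseteq> V"
  shows "hereditarily_simplicial G sg X Y \<longleftrightarrow>
    (\<forall>W\<subseteq>V. induced_edges G W \<noteq> {} \<longrightarrow>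
       (\<exists>e\<in>induced_edges G W. signed_simplicial (induced_edges G W) sg (X \<inter> W) (Y \<inter> W) e))"
proof -
  have "induced_edges G W = induced_edges G (W \<inter> V)" for W
    using assms unfolding induced_edges_def by auto
  moreover have "signed_simplicial (induced_edges G W) sg (X \<inter> W) (Y \<inter> W) e
      \<longleftrightarrow> signed_simplicial (induced_edges G W) sg X Y e" for W e
    by (rule signed_simplicial_Int_sides) (auto simp: induced_edges_def)
  ultimately show ?thesis
    unfolding hereditarily_simplicial_def by (metis inf_le2)
qed

theorem corollary5p2:
  fixes V X Y :: "'a set" and E :: "'a set set" and sg :: "'a set \<Rightarrow> bool"
  assumes "signed_bigraph V E X Y"
  shows "\<not> chordal_sb E sg X Y \<longleftrightarrow>
    (\<exists>W\<subseteq>V. induced_edges E W \<noteq> {} \<and>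
       \<not> (\<exists>e\<in>induced_edges E W.
             signed_simplicial (induced_edges E W) sg (X \<inter> W) (Y \<inter> W) e))"
proof -
  have bp: "bipartite X Y E" and EV: "\<forall>e\<in>E. e \<subseteq> V" and "finite V"
    using assms unfolding signed_bigraph_def bipartite_def by auto
  then have "finite E" by (meson Pow_iff finite_Pow_iff finite_subset subsetI)
  then have "chordal_sb E sg X Y \<longleftrightarrow> hereditarily_simplicial E sg X Y"
    using chordal_imp_hereditarily_simplicial hereditarily_simplicial_imp_chordal bp by blast
  then show ?thesis
    unfolding hereditarily_simplicial_iff[OF EV] by blast
qed

end
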